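(* Let $r \geq 5$ be odd and consider type $D_r$ realized in $\mathbb{R}^r$ with orthonormal basis $e_1,\dots,e_r$, simple roots $\alpha_i = e_i - e_{i+1}$ ($1\le i\le r-1$), $\alpha_r = e_{r-1}+e_r$. Let $C$ be the linear map with $C(e_1) = -e_r$, $C(e_i) = -e_i$ for $2 \le i \le r-1$, and $C(e_r) = e_1$. Then $C$ and $C^{-1}$ are rational elements of $W(D_r)$ and each has valency $1$ in the rationality graph $\Gamma(D_r)$: the only neighbor of $C$ is $s_{r-1}C$, and the only neighbor of $C^{-1}$ is $s_r C^{-1}$.
   Context: $W(D_r)$ is the Weyl group, generated by simple reflections $s_i$ ($s_i$ swaps $e_i, e_{i+1}$ for $i<r$; $s_r$ maps $e_{r-1}\mapsto -e_r$, $e_r \mapsto -e_{r-1}$). Positive roots $\Pi_+ = \{e_i \pm e_j : i<j\}$. $\alpha\le\beta$ iff $\beta-\alpha$ is a nonnegative integer combination of simple roots. For $A\subseteq\Pi_+$, $\mathrm{Adj}(A) = \{\alpha\in\Pi_+ : \exists\beta\in A,\ \alpha\le\beta\}$. For $u\in W$: $\nu^0(u) = u(\Pi_+)\cap\Pi_+$, $\nu^k(u) = u(\mathrm{Adj}\,\nu^{k-1}(u))\cap\Pi_+$; the sequence is descending and eventually constant with value $\nu(u)$; $u$ is rational iff $\nu(u)=\emptyset$. The rationality graph $\Gamma(D_r)$ has the rational elements as vertices, $u,v$ adjacent iff $u = s_i v$ for some $i$. *)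

theory Defs
  imports Main "HOL.Real"
begin

text \<open>Vectors of R^r are modelled as functions nat => real; only coordinates 1..r
  matter, and all maps considered fix the coordinates outside 1..r.\<close>

type_synonym vec = "nat \<Rightarrow> real"
type_synonym lmap = "vec \<Rightarrow> vec"

definition ee :: "nat \<Rightarrow> vec" where
  "ee i = (\<lambda>k. if k = i then 1 else 0)"

definition sref :: "nat \<Rightarrow> nat \<Rightarrow> lmap" where
  "sref r i x =
     (if i < r then (\<lambda>j. if j = i then x (i+1) else if j = i+1 then x i else x j)
      else (\<lambda>j. if j = r - 1 then - x r else if j = r then - x (r - 1) else x j))"

inductive_set weyl :: "nat \<Rightarrow> lmap set" for r :: nat where
  weyl_id: "id \<in> weyl r"
| weyl_step: "u \<in> weyl r \<Longrightarrow> i \<in> {1..r} \<Longrightarrow> sref r i \<circ> u \<in> weyl r"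

definition alpha :: "nat \<Rightarrow> nat \<Rightarrow> vec" where
  "alpha r i = (if i < r then (\<lambda>k. ee i k - ee (i+1) k)
                else (\<lambda>k. ee (r - 1) k + ee r k))"

definition posroots :: "nat \<Rightarrow> vec set" where
  "posroots r =
     {(\<lambda>k. ee i k + ee j k) | i j. 1 \<le> i \<and> i < j \<and> j \<le> r}
   \<union> {(\<lambda>k. ee i k - ee j k) | i j. 1 \<le> i \<and> i < j \<and> j \<le> r}"

definition root_le :: "nat \<Rightarrow> vec \<Rightarrow> vec \<Rightarrow> bool" where
  "root_le r a b \<longleftrightarrow>
     (\<exists>c :: nat \<Rightarrow> nat. \<forall>m. b m - a m = (\<Sum>k = 1..r. real (c k) * alpha r k m))"

definition Adj :: "nat \<Rightarrow> vec set \<Rightarrow> vec set" where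
  "Adj r A = {a \<in> posroots r. \<exists>b \<in> A. root_le r a b}"

fun nuk :: "nat \<Rightarrow> lmap \<Rightarrow> nat \<Rightarrow> vec set" where
  "nuk r u 0 = u ` posroots r \<inter> posroots r"
| "nuk r u (Suc k) = u ` Adj r (nuk r u k) \<inter> posroots r"

text \<open>u is rational iff the eventual (stable) value nu(u) of the sequence nu^k(u) is empty.\<close>
definition rational :: "nat \<Rightarrow> lmap \<Rightarrow> bool" where
  "rational r u \<longleftrightarrow> (\<exists>K. \<forall>k \<ge> K. nuk r u k = {})"

definition gamma_vertex :: "nat \<Rightarrow> lmap \<Rightarrow> bool" where
  "gamma_vertex r u \<longleftrightarrow> u \<in> weyl r \<and> rational r u"

definition gamma_adj :: "nat \<Rightarrow> lmap \<Rightarrow> lmap \<Rightarrow> bool" where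
  "gamma_adj r u v \<longleftrightarrow> gamma_vertex r u \<and> gamma_vertex r v \<and> (\<exists>i \<in> {1..r}. u = sref r i \<circ> v)"

definition gamma_neighbors :: "nat \<Rightarrow> lmap \<Rightarrow> lmap set" where
  "gamma_neighbors r u = {v. gamma_adj r u v}"

definition Cmap :: "nat \<Rightarrow> lmap" where
  "Cmap r x = (\<lambda>j. if j = 1 then x r
                   else if j = r then - x 1
                   else if 2 \<le> j \<and> j \<le> r - 1 then - x j
                   else x j)"

end

theory Submission
  imports Defs "HOL-Combinatorics.Transposition"
begin

text \<open>
  Negating the last coordinate is the diagram automorphism of D_r: it exchanges alpha_(r-1) and
  alpha_r, hence s_(r-1) and s_r, and preserves the positive roots and their order. Conjugation
  by it is therefore an automorphism of the rationality graph, and it maps C to C^-1, so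
  everything about C^-1 is transported from C.

  C lies in W(D_r) since it is the transposition of the coordinates 1 and r followed by the
  negation of the r - 1 coordinates 2, ..., r, an even number of them. C and s_(r-1) C are
  rational: the coordinate sum h and the first coordinate are monotone for the root order, and
  every positive root a with positive image u a either has h a = 2 and h (u a) = 0, or has
  h a = 0, first coordinate 1, and h and the first coordinate vanish on u a; hence nu^2 = {}.
  For every other simple reflection s_i there is a positive root gamma with
  gamma \<le> s_i C gamma, and s_i C gamma then lies in every nu^k.
\<close>

section \<open>Positive roots and the root order\<close>

definition ee2 :: "nat \<Rightarrow> real \<Rightarrow> nat \<Rightarrow> real \<Rightarrow> vec" where
  "ee2 i s j t = (\<lambda>k. s * ee i k + t * ee j k)"

lemma ee2_apply: "ee2 i s j t k = s * ee i k + t * ee j k"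
  by (simp add: ee2_def)

lemma ee2_commute: "ee2 i s j t = ee2 j t i s"
  by (auto simp: ee2_def)

lemma posroots_eq_ee2:
  "posroots r = {ee2 i 1 j t | i j t. 1 \<le> i \<and> i < j \<and> j \<le> r \<and> (t = 1 \<or> t = -1)}"
  unfolding posroots_def ee2_def
  by (auto simp: algebra_simps; metis (no_types, opaque_lifting) diff_conv_add_uminus mult_minus_left mult_1)

lemma ee2_in_posroots_iff:
  assumes "i \<in> {1..r}" "j \<in> {1..r}" "i \<noteq> j" "s = 1 \<or> s = -1" "t = 1 \<or> t = -1"
  shows "ee2 i s j t \<in> posroots r \<longleftrightarrow> (if i < j then s = 1 else t = 1)"
proof -
  have "ee2 i s j t \<in> posroots r \<longleftrightarrow> s = 1" if "i < j" "i \<in> {1..r}" "j \<in> {1..r}"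
    "s = 1 \<or> s = -1" "t = 1 \<or> t = -1" for i j s t
  proof
    assume "ee2 i s j t \<in> posroots r"
    then obtain i' j' t' where "i' < j'" "ee2 i s j t = ee2 i' 1 j' t'"
      by (auto simp: posroots_eq_ee2)
    then have "ee2 i s j t i = ee2 i' 1 j' t' i" "ee2 i s j t i' = ee2 i' 1 j' t' i'"
      by simp_all
    with that \<open>i' < j'\<close> show "s = 1"
      by (auto simp: ee2_def ee_def split: if_splits)
  qed (use that in \<open>auto simp: posroots_eq_ee2\<close>)
  from this[of i j s t] this[of j i t s] assms show ?thesis
    by (cases "i < j") (auto simp: ee2_commute[of i])
qed

lemma ee2_in_posroots:
  "1 \<le> i \<Longrightarrow> i < j \<Longrightarrow> j \<le> r \<Longrightarrow> t = 1 \<or> t = -1 \<Longrightarrow> ee2 i 1 j t \<in> posroots r"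
  unfolding posroots_eq_ee2 by blast

lemma root_le_refl: "root_le r a a"
  unfolding root_le_def by (rule exI[of _ "\<lambda>_. 0"]) simp

lemma root_le_trans: "root_le r a b \<Longrightarrow> root_le r b c \<Longrightarrow> root_le r a c"
proof -
  assume "root_le r a b" "root_le r b c"
  then obtain c1 c2 :: "nat \<Rightarrow> nat"
    where "\<And>m. b m - a m = (\<Sum>k = 1..r. real (c1 k) * alpha r k m)"
      and "\<And>m. c m - b m = (\<Sum>k = 1..r. real (c2 k) * alpha r k m)"
    unfolding root_le_def by blast
  then have "c m - a m = (\<Sum>k = 1..r. real (c1 k + c2 k) * alpha r k m)" for m
    by (simp add: algebra_simps sum.distrib)
  then show ?thesis unfolding root_le_def by (intro exI[of _ "\<lambda>k. c1 k + c2 k"]) blast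
qed

lemma root_le_add_alpha: "k \<in> {1..r} \<Longrightarrow> root_le r a (\<lambda>m. a m + alpha r k m)"
  unfolding root_le_def
proof (intro exI[of _ "\<lambda>k'. if k' = k then 1 else 0"] allI)
  fix m assume "k \<in> {1..r}"
  then show "a m + alpha r k m - a m = (\<Sum>k' = 1..r. real (if k' = k then 1 else 0) * alpha r k' m)"
    by (simp add: if_distrib[of real] if_distrib[of "\<lambda>c. c * _"] sum.delta cong: if_cong)
qed

lemma root_le_ee2_diff:
  assumes "1 \<le> j" "j \<le> k" "k \<le> r"
  shows "root_le r (ee2 i 1 j (-1)) (ee2 i 1 k (-1))"
  using assms(2,3)
proof (induction k rule: dec_induct)
  case base
  show ?case by (rule root_le_refl)
next
  case (step k)
  have "ee2 i 1 (Suc k) (-1) = (\<lambda>m. ee2 i 1 k (-1) m + alpha r k m)"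
    using step by (auto simp: fun_eq_iff ee2_def alpha_def)
  then have "root_le r (ee2 i 1 k (-1)) (ee2 i 1 (Suc k) (-1))"
    using step assms(1) by (simp add: root_le_add_alpha)
  then show ?case
    using step by (auto intro: root_le_trans)
qed

definition pairing :: "nat \<Rightarrow> (nat \<Rightarrow> real) \<Rightarrow> vec \<Rightarrow> real" where
  "pairing r w v = (\<Sum>m = 1..r. w m * v m)"

lemma pairing_ee:
  "pairing r w (ee i) = (if i \<in> {1..r} then w i else 0)"
  by (simp add: pairing_def ee_def if_distrib sum.delta cong: if_cong)

lemma pairing_ee2:
  "i \<in> {1..r} \<Longrightarrow> j \<in> {1..r} \<Longrightarrow> pairing r w (ee2 i s j t) = s * w i + t * w j"
  using pairing_ee[of r w i] pairing_ee[of r w j]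
  by (simp add: pairing_def ee2_def algebra_simps sum.distrib flip: sum_distrib_left)

lemma pairing_add: "pairing r w (\<lambda>m. x m + y m) = pairing r w x + pairing r w y"
  by (simp add: pairing_def algebra_simps sum.distrib)

lemma pairing_diff: "pairing r w (\<lambda>m. x m - y m) = pairing r w x - pairing r w y"
  by (simp add: pairing_def algebra_simps sum_subtractf)

lemma pairing_alpha:
  assumes "k \<in> {1..r}" "r \<ge> 2"
  shows "pairing r w (alpha r k) = (if k < r then w k - w (k+1) else w (r-1) + w r)"
  using assms by (auto simp: alpha_def pairing_add pairing_diff pairing_ee)

lemma pairing_mono:
  assumes "root_le r a b" and "\<And>k. k \<in> {1..r} \<Longrightarrow> 0 \<le> pairing r w (alpha r k)"
  shows "pairing r w a \<le> pairing r w b"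
proof -
  obtain c :: "nat \<Rightarrow> nat" where c: "\<And>m. b m - a m = (\<Sum>k = 1..r. real (c k) * alpha r k m)"
    using assms(1) unfolding root_le_def by blast
  have "pairing r w b - pairing r w a = (\<Sum>m = 1..r. w m * (b m - a m))"
    by (simp add: pairing_def sum_subtractf algebra_simps)
  also have "\<dots> = (\<Sum>k = 1..r. real (c k) * pairing r w (alpha r k))"
    unfolding c pairing_def sum_distrib_left
    by (subst sum.swap) (simp add: sum_distrib_left algebra_simps)
  also have "\<dots> \<ge> 0"
    by (intro sum_nonneg mult_nonneg_nonneg assms(2)) auto
  finally show ?thesis by simp
qed

lemma height_mono: "root_le r a b \<Longrightarrow> r \<ge> 2 \<Longrightarrow> pairing r (\<lambda>_. 1) a \<le> pairing r (\<lambda>_. 1) b"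
  by (rule pairing_mono) (simp_all add: pairing_alpha)

lemma first_coord_mono:
  assumes "root_le r a b" "r \<ge> 2"
  shows "a 1 \<le> b 1"
proof -
  have "pairing r (ee 1) v = v 1" for v
    using assms(2) pairing_ee[of r v 1] by (simp add: pairing_def ee_def mult.commute)
  moreover have "pairing r (ee 1) a \<le> pairing r (ee 1) b"
    using assms by (intro pairing_mono) (simp_all add: pairing_alpha ee_def)
  ultimately show ?thesis by simp
qed

section \<open>Rationality criteria\<close>

lemma rational_if_nuk_empty: "nuk r u K = {} \<Longrightarrow> rational r u"
proof -
  assume empty: "nuk r u K = {}"
  have "nuk r u k = {}" if "K \<le> k" for k
    using that by (induction rule: dec_induct) (auto simp: empty Adj_def)
  then show ?thesis unfolding rational_def by blast
qed

lemma rational_by_potentials: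
  fixes G F :: "vec \<Rightarrow> real"
  assumes G_mono: "\<And>a b. root_le r a b \<Longrightarrow> G a \<le> G b"
    and F_mono: "\<And>a b. root_le r a b \<Longrightarrow> F a \<le> F b"
    and drop: "\<And>a. a \<in> posroots r \<Longrightarrow> u a \<in> posroots r \<Longrightarrow>
      (G a = 2 \<and> G (u a) = 0) \<or> (G a = 0 \<and> F a = 1 \<and> G (u a) = 0 \<and> F (u a) = 0)"
  shows "rational r u"
proof -
  have nu0: "G x = 0" if "x \<in> nuk r u 0" for x
    using that drop by auto
  have nu1: "G x = 0 \<and> F x = 0" if "x \<in> nuk r u 1" for x
  proof -
    obtain a b where "x = u a" "a \<in> posroots r" "u a \<in> posroots r" "b \<in> nuk r u 0" "root_le r a b"
      using \<open>x \<in> nuk r u 1\<close> by (auto simp: Adj_def)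
    moreover from this have "G a \<le> 0" using nu0 G_mono by fastforce
    ultimately show ?thesis using drop by fastforce
  qed
  have "nuk r u 2 = {}"
  proof (rule ccontr)
    assume "nuk r u 2 \<noteq> {}"
    then obtain a b where "a \<in> posroots r" "u a \<in> posroots r" "b \<in> nuk r u 1" "root_le r a b"
      unfolding numeral_2_eq_2 One_nat_def[symmetric] nuk.simps(2) Adj_def by blast
    moreover from this have "G a \<le> 0" "F a \<le> 0" using nu1 G_mono F_mono by fastforce+
    ultimately show False using drop by fastforce
  qed
  then show ?thesis by (rule rational_if_nuk_empty)
qed

lemma not_rational_if_root_le_image:
  assumes "\<gamma> \<in> posroots r" "u \<gamma> \<in> posroots r" "root_le r \<gamma> (u \<gamma>)"
  shows "\<not> rational r u"
proof -
  have "u \<gamma> \<in> nuk r u k" for k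
    by (induction k) (use assms in \<open>auto simp: Adj_def\<close>)
  then show ?thesis unfolding rational_def by blast
qed

section \<open>The Weyl group and the rationality graph\<close>

lemma weyl_comp: "u \<in> weyl r \<Longrightarrow> v \<in> weyl r \<Longrightarrow> u \<circ> v \<in> weyl r"
  by (induction u rule: weyl.induct) (auto simp: comp_assoc intro: weyl.weyl_step)

lemma sref_in_weyl: "i \<in> {1..r} \<Longrightarrow> sref r i \<in> weyl r"
  using weyl.weyl_step[OF weyl.weyl_id, of i r] by simp

lemma sref_sref: "i \<in> {1..r} \<Longrightarrow> r \<ge> 2 \<Longrightarrow> sref r i (sref r i x) = x"
  by (auto simp: fun_eq_iff sref_def)

lemma sref_ee2:
  "i < r \<Longrightarrow> sref r i (ee2 a s b t) = ee2 (transpose i (i + 1) a) s (transpose i (i + 1) b) t"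
  by (auto simp: fun_eq_iff sref_def ee2_def ee_def transpose_def)

definition swap_coords :: "nat \<Rightarrow> nat \<Rightarrow> lmap" where
  "swap_coords a b x = (\<lambda>j. if j = a then x b else if j = b then x a else x j)"

definition negate_coords :: "nat set \<Rightarrow> lmap" where
  "negate_coords S x = (\<lambda>j. if j \<in> S then - x j else x j)"

lemma swap_coords_in_weyl:
  assumes "1 \<le> a" "a < b" "b \<le> r"
  shows "swap_coords a b \<in> weyl r"
  using \<open>a < b\<close>[folded Suc_le_eq] \<open>b \<le> r\<close>
proof (induction b rule: dec_induct)
  case base
  have "swap_coords a (Suc a) = sref r a"
    using base by (auto simp: fun_eq_iff swap_coords_def sref_def)
  then show ?case using base assms(1) by (simp add: sref_in_weyl)
next
  case (step b)
  have "swap_coords a (Suc b) = sref r b \<circ> swap_coords a b \<circ> sref r b"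
    using step by (auto simp: fun_eq_iff swap_coords_def sref_def)
  moreover have "sref r b \<in> weyl r" "swap_coords a b \<in> weyl r"
    using step assms(1) by (auto intro: sref_in_weyl)
  ultimately show ?case by (metis weyl_comp)
qed

lemma negate_pair_in_weyl:
  assumes "1 \<le> j" "j < r"
  shows "negate_coords {j, r} \<in> weyl r"
proof -
  have last_pair: "negate_coords {r - 1, r} \<in> weyl r"
  proof -
    have "negate_coords {r - 1, r} = sref r r \<circ> sref r (r - 1)"
      using assms by (auto simp: fun_eq_iff negate_coords_def sref_def)
    then show ?thesis using assms by (simp add: weyl_comp sref_in_weyl)
  qed
  show ?thesis
  proof (cases "j = r - 1")
    case False
    then have "negate_coords {j, r} = swap_coords j (r - 1) \<circ> negate_coords {r - 1, r} \<circ> swap_coords j (r - 1)"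
      using assms by (auto simp: fun_eq_iff negate_coords_def swap_coords_def)
    moreover have "swap_coords j (r - 1) \<in> weyl r"
      using assms False by (intro swap_coords_in_weyl) auto
    ultimately show ?thesis using last_pair by (metis weyl_comp)
  qed (use last_pair in simp)
qed

lemma negate_tail_in_weyl: "2 * n + 1 < r \<Longrightarrow> negate_coords {r - (2 * n + 1)..r} \<in> weyl r"
proof (induction n)
  case 0
  have "{r - 1..r} = {r - 1, r}"
    using 0 by auto
  then show ?case using 0 negate_pair_in_weyl[of "r - 1" r] by simp
next
  case (Suc n)
  define j where "j = r - (2 * Suc n + 1)"
  have j: "1 \<le> j" "j + 2 < r" "r - (2 * n + 1) = j + 2"
    using Suc.prems unfolding j_def by auto
  have "negate_coords {j..r} = negate_coords {j, r} \<circ> negate_coords {j + 1, r} \<circ> negate_coords {j + 2..r}"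
    using j by (auto simp: fun_eq_iff negate_coords_def)
  moreover have "negate_coords {j, r} \<in> weyl r" "negate_coords {j + 1, r} \<in> weyl r"
    using j by (auto intro: negate_pair_in_weyl)
  moreover have "negate_coords {j + 2..r} \<in> weyl r"
    using Suc j by simp
  ultimately show ?case unfolding j_def[symmetric] by (metis weyl_comp)
qed

lemma gamma_neighbors_eq_singleton:
  assumes "r \<ge> 2" "k \<in> {1..r}"
    and "gamma_vertex r u" "gamma_vertex r (sref r k \<circ> u)"
    and "\<And>i. i \<in> {1..r} \<Longrightarrow> i \<noteq> k \<Longrightarrow> \<not> rational r (sref r i \<circ> u)"
  shows "gamma_neighbors r u = {sref r k \<circ> u}"
proof -
  have sref_cancel: "u = sref r i \<circ> v \<longleftrightarrow> v = sref r i \<circ> u" if "i \<in> {1..r}" for i v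
  proof -
    have "sref r i \<circ> (sref r i \<circ> w) = w" for w
      using that assms(1) by (simp add: fun_eq_iff sref_sref)
    then show ?thesis by metis
  qed
  show ?thesis
  proof (intro set_eqI iffI)
    fix v assume "v \<in> gamma_neighbors r u"
    then obtain i where i: "i \<in> {1..r}" "v = sref r i \<circ> u" "rational r v"
      unfolding gamma_neighbors_def gamma_adj_def gamma_vertex_def using sref_cancel by blast
    then have "i = k"
      using assms(5) by blast
    with i show "v \<in> {sref r k \<circ> u}" by simp
  next
    fix v assume "v \<in> {sref r k \<circ> u}"
    then show "v \<in> gamma_neighbors r u"
      using assms(2-4) sref_cancel unfolding gamma_neighbors_def gamma_adj_def by auto
  qed
qed

section \<open>The diagram automorphism\<close>

lemma negate_coords_involutive [simp]: "negate_coords S (negate_coords S x) = x"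
  by (simp add: negate_coords_def fun_eq_iff)

lemma negate_last_in_posroots:
  assumes "x \<in> posroots r"
  shows "negate_coords {r} x \<in> posroots r"
proof -
  obtain i j t where ij: "1 \<le> i" "i < j" "j \<le> r" "t = 1 \<or> t = -1" and x: "x = ee2 i 1 j t"
    using assms by (auto simp: posroots_eq_ee2)
  then have "negate_coords {r} x = ee2 i 1 j (if j = r then - t else t)"
    by (auto simp: fun_eq_iff negate_coords_def ee2_def ee_def)
  then show ?thesis using ij by (auto intro: ee2_in_posroots)
qed

lemma negate_last_in_posroots_iff: "negate_coords {r} x \<in> posroots r \<longleftrightarrow> x \<in> posroots r"
  using negate_last_in_posroots negate_coords_involutive by metis

lemma image_negate_coords_eq:
  assumes "\<And>x. negate_coords S x \<in> B \<longleftrightarrow> x \<in> A"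
  shows "negate_coords S ` A = B"
proof (intro set_eqI iffI)
  fix x assume "x \<in> B"
  then show "x \<in> negate_coords S ` A"
    by (intro image_eqI[of x _ "negate_coords S x"]) (simp_all flip: assms)
qed (use assms in auto)

lemma negate_last_posroots: "negate_coords {r} ` posroots r = posroots r"
  by (rule image_negate_coords_eq) (rule negate_last_in_posroots_iff)

lemma negate_last_alpha:
  assumes "k \<in> {1..r}" "r \<ge> 2"
  shows "negate_coords {r} (alpha r k) = alpha r (transpose (r - 1) r k)"
  using assms by (auto simp: fun_eq_iff negate_coords_def alpha_def ee_def transpose_def)

lemma root_le_negate_last:
  assumes "root_le r a b" "r \<ge> 2"
  shows "root_le r (negate_coords {r} a) (negate_coords {r} b)"
proof -
  let ?\<tau> = "transpose (r - 1) r"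
  obtain c :: "nat \<Rightarrow> nat" where c: "\<And>m. b m - a m = (\<Sum>k = 1..r. real (c k) * alpha r k m)"
    using assms(1) unfolding root_le_def by blast
  have "negate_coords {r} b m - negate_coords {r} a m
      = (\<Sum>k = 1..r. real (c k) * negate_coords {r} (alpha r k) m)" for m
    using c[of m] by (auto simp: negate_coords_def sum_negf)
  also have "\<dots> m = (\<Sum>k = 1..r. real (c k) * alpha r (?\<tau> k) m)" for m
    using assms(2) by (intro sum.cong) (simp_all add: negate_last_alpha)
  also have "\<dots> m = (\<Sum>k = 1..r. real (c (?\<tau> k)) * alpha r k m)" for m
    using assms(2) by (subst sum.reindex_bij_betw[of ?\<tau>, symmetric]) simp_all
  finally show ?thesis unfolding root_le_def by (intro exI[of _ "c \<circ> ?\<tau>"]) simp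
qed

lemma root_le_negate_last_iff:
  "r \<ge> 2 \<Longrightarrow> root_le r (negate_coords {r} a) (negate_coords {r} b) \<longleftrightarrow> root_le r a b"
  using root_le_negate_last negate_coords_involutive by metis

lemma Adj_negate_last:
  assumes "r \<ge> 2"
  shows "Adj r (negate_coords {r} ` A) = negate_coords {r} ` Adj r A"
proof (rule sym, rule image_negate_coords_eq)
  fix a
  show "negate_coords {r} a \<in> Adj r (negate_coords {r} ` A) \<longleftrightarrow> a \<in> Adj r A"
    using root_le_negate_last_iff[OF assms, of a]
    unfolding Adj_def by (auto simp: negate_last_in_posroots_iff)
qed

definition flip_conj :: "nat \<Rightarrow> lmap \<Rightarrow> lmap" where
  "flip_conj r u = negate_coords {r} \<circ> u \<circ> negate_coords {r}"

lemma flip_conj_flip_conj [simp]: "flip_conj r (flip_conj r u) = u"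
  by (simp add: flip_conj_def fun_eq_iff)

lemma flip_conj_comp: "flip_conj r (u \<circ> v) = flip_conj r u \<circ> flip_conj r v"
  by (simp add: flip_conj_def fun_eq_iff)

lemma nuk_flip_conj:
  assumes "r \<ge> 2"
  shows "nuk r (flip_conj r u) k = negate_coords {r} ` nuk r u k"
proof -
  have inj: "inj (negate_coords {r})"
    by (metis injI negate_coords_involutive)
  have conj_image: "flip_conj r u ` negate_coords {r} ` X = negate_coords {r} ` u ` X" for X
    by (simp add: flip_conj_def image_image)
  show ?thesis
  proof (induction k)
    case 0
    have "nuk r (flip_conj r u) 0
        = flip_conj r u ` negate_coords {r} ` posroots r \<inter> negate_coords {r} ` posroots r"
      by (simp add: negate_last_posroots)
    then show ?case
      by (simp add: conj_image image_Int[OF inj])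
  next
    case (Suc k)
    have "nuk r (flip_conj r u) (Suc k)
        = flip_conj r u ` negate_coords {r} ` Adj r (nuk r u k) \<inter> negate_coords {r} ` posroots r"
      using Suc by (simp add: Adj_negate_last[OF assms] negate_last_posroots)
    then show ?case
      by (simp add: conj_image image_Int[OF inj])
  qed
qed

lemma rational_flip_conj: "r \<ge> 2 \<Longrightarrow> rational r (flip_conj r u) \<longleftrightarrow> rational r u"
  by (simp add: rational_def nuk_flip_conj)

lemma flip_conj_sref:
  assumes "i \<in> {1..r}" "r \<ge> 2"
  shows "flip_conj r (sref r i) = sref r (transpose (r - 1) r i)"
  using assms by (auto simp: fun_eq_iff flip_conj_def negate_coords_def sref_def transpose_def)

lemma transpose_last_in_range: "(i :: nat) \<in> {1..r} \<Longrightarrow> r \<ge> 2 \<Longrightarrow> transpose (r - 1) r i \<in> {1..r}"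
  by (auto simp: transpose_def)

lemma weyl_flip_conj:
  assumes "u \<in> weyl r" "r \<ge> 2"
  shows "flip_conj r u \<in> weyl r"
  using assms(1)
proof (induction u rule: weyl.induct)
  case weyl_id
  then show ?case by (simp add: flip_conj_def fun_eq_iff weyl.weyl_id[unfolded id_def])
next
  case (weyl_step u i)
  then have "flip_conj r (sref r i \<circ> u) = sref r (transpose (r - 1) r i) \<circ> flip_conj r u"
    using assms(2) by (simp add: flip_conj_comp flip_conj_sref)
  moreover have "transpose (r - 1) r i \<in> {1..r}"
    using weyl_step assms(2) by (intro transpose_last_in_range)
  ultimately show ?case
    using weyl_step by (metis weyl.weyl_step)
qed

lemma gamma_vertex_flip_conj: "r \<ge> 2 \<Longrightarrow> gamma_vertex r (flip_conj r u) \<longleftrightarrow> gamma_vertex r u"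
  using weyl_flip_conj[of u r] weyl_flip_conj[of "flip_conj r u" r]
  by (auto simp: gamma_vertex_def rational_flip_conj)

lemma gamma_adj_flip_conj:
  assumes "gamma_adj r u v" "r \<ge> 2"
  shows "gamma_adj r (flip_conj r u) (flip_conj r v)"
proof -
  obtain i where i: "i \<in> {1..r}" "u = sref r i \<circ> v"
    using assms(1) unfolding gamma_adj_def by blast
  then have "flip_conj r u = sref r (transpose (r - 1) r i) \<circ> flip_conj r v"
    using assms(2) by (simp add: flip_conj_comp flip_conj_sref)
  moreover have "gamma_vertex r (flip_conj r u)" "gamma_vertex r (flip_conj r v)"
    using assms unfolding gamma_adj_def by (simp_all add: gamma_vertex_flip_conj)
  ultimately show ?thesis
    using transpose_last_in_range[OF i(1) assms(2)] unfolding gamma_adj_def by blast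
qed

lemma gamma_neighbors_flip_conj:
  assumes "r \<ge> 2"
  shows "gamma_neighbors r (flip_conj r u) = flip_conj r ` gamma_neighbors r u"
proof (intro set_eqI iffI)
  fix v assume "v \<in> gamma_neighbors r (flip_conj r u)"
  then have "flip_conj r v \<in> gamma_neighbors r u"
    using gamma_adj_flip_conj[OF _ assms, of "flip_conj r u" v] by (simp add: gamma_neighbors_def)
  then show "v \<in> flip_conj r ` gamma_neighbors r u"
    by (intro image_eqI[of v _ "flip_conj r v"]) simp_all
qed (auto simp: gamma_neighbors_def intro: gamma_adj_flip_conj[OF _ assms])

section \<open>The element C\<close>

lemma posroot_image_signed_perm:
  assumes perm: "\<And>i. i \<in> {1..r} \<Longrightarrow> \<pi> i \<in> {1..r}" "inj_on \<pi> {1..r}"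
    and sign: "\<And>i. \<sigma> i = 1 \<or> \<sigma> i = -1"
    and image: "\<And>i j t. i \<in> {1..r} \<Longrightarrow> j \<in> {1..r} \<Longrightarrow>
      u (ee2 i 1 j t) = ee2 (\<pi> i) (\<sigma> i) (\<pi> j) (t * \<sigma> j)"
    and "a \<in> posroots r" "u a \<in> posroots r"
  obtains i j t where "1 \<le> i" "i < j" "j \<le> r" "t = 1 \<or> t = -1"
    "a = ee2 i 1 j t" "u a = ee2 (\<pi> i) (\<sigma> i) (\<pi> j) (t * \<sigma> j)"
    "if \<pi> i < \<pi> j then \<sigma> i = 1 else t * \<sigma> j = 1"
proof -
  obtain i j t where ij: "1 \<le> i" "i < j" "j \<le> r" "t = 1 \<or> t = -1" and a: "a = ee2 i 1 j t"
    using \<open>a \<in> posroots r\<close> by (auto simp: posroots_eq_ee2)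
  have ua: "u a = ee2 (\<pi> i) (\<sigma> i) (\<pi> j) (t * \<sigma> j)"
    using ij by (simp add: a image)
  have "\<pi> i \<noteq> \<pi> j"
    using ij perm(2) by (auto dest: inj_onD)
  moreover have "t * \<sigma> j = 1 \<or> t * \<sigma> j = -1"
    using ij(4) sign[of j] by auto
  ultimately have "if \<pi> i < \<pi> j then \<sigma> i = 1 else t * \<sigma> j = 1"
    using \<open>u a \<in> posroots r\<close> ij perm(1) sign[of i]
    by (subst ee2_in_posroots_iff[symmetric]) (auto simp: ua)
  with ij a ua show ?thesis by (rule that)
qed

lemma Cmap_in_weyl:
  assumes "r \<ge> 3" "odd r"
  shows "Cmap r \<in> weyl r"
proof -
  obtain m where "r = 2 * m + 1"
    using assms(2) by (rule oddE)
  then have r_eq: "r = 2 * (m - 1) + 3"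
    using assms(1) by simp
  have "Cmap r = negate_coords {2..r} \<circ> swap_coords 1 r"
    using assms by (auto simp: fun_eq_iff negate_coords_def swap_coords_def Cmap_def)
  moreover have "negate_coords {2..r} \<in> weyl r"
    using negate_tail_in_weyl[of "m - 1" r] r_eq by simp
  moreover have "swap_coords 1 r \<in> weyl r"
    using assms by (intro swap_coords_in_weyl) auto
  ultimately show ?thesis by (metis weyl_comp)
qed

lemma inv_Cmap: "r \<ge> 2 \<Longrightarrow> inv (Cmap r) = flip_conj r (Cmap r)"
  by (rule inv_unique_comp) (auto simp: fun_eq_iff flip_conj_def negate_coords_def Cmap_def)

lemma Cmap_ee2:
  assumes "i \<in> {1..r}" "j \<in> {1..r}" "r \<ge> 2"
  shows "Cmap r (ee2 i s j t)
    = ee2 (transpose 1 r i) (if i = r then s else - s) (transpose 1 r j) (if j = r then t else - t)"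
  using assms by (auto simp: fun_eq_iff Cmap_def ee2_def ee_def transpose_def)

lemma rational_Cmap:
  assumes "r \<ge> 3"
  shows "rational r (Cmap r)"
proof (rule rational_by_potentials[OF height_mono first_coord_mono])
  let ?h = "pairing r (\<lambda>_. 1)"
  fix a assume a: "a \<in> posroots r" "Cmap r a \<in> posroots r"
  define \<sigma> :: "nat \<Rightarrow> real" where "\<sigma> i = (if i = r then 1 else -1)" for i
  obtain i j t where "1 \<le> i" "i < j" "j \<le> r" "t = 1 \<or> t = -1" "a = ee2 i 1 j t"
    "Cmap r a = ee2 (transpose 1 r i) (\<sigma> i) (transpose 1 r j) (t * \<sigma> j)"
    "if transpose 1 r i < transpose 1 r j then \<sigma> i = 1 else t * \<sigma> j = 1"
    by (rule posroot_image_signed_perm[where \<pi> = "transpose 1 r" and \<sigma> = \<sigma> and u = "Cmap r", OF _ _ _ _ a])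
      (use assms in \<open>auto simp: \<sigma>_def Cmap_ee2 transpose_def\<close>)
  then show "?h a = 2 \<and> ?h (Cmap r a) = 0 \<or> ?h a = 0 \<and> a 1 = 1 \<and> ?h (Cmap r a) = 0 \<and> Cmap r a 1 = 0"
    using assms by (auto simp: \<sigma>_def pairing_ee2 ee2_apply transpose_def ee_def split: if_splits)
qed (use assms in auto)

lemma rational_sref_Cmap:
  assumes "r \<ge> 3"
  shows "rational r (sref r (r - 1) \<circ> Cmap r)"
proof (rule rational_by_potentials[OF height_mono first_coord_mono])
  let ?h = "pairing r (\<lambda>_. 1)" and ?D = "sref r (r - 1) \<circ> Cmap r"
  fix a assume a: "a \<in> posroots r" "?D a \<in> posroots r"
  define \<sigma> :: "nat \<Rightarrow> real" where "\<sigma> i = (if i = r then 1 else -1)" for i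
  define \<pi> where "\<pi> = transpose (r - 1) r \<circ> transpose 1 r"
  have image: "?D (ee2 i 1 j t) = ee2 (\<pi> i) (\<sigma> i) (\<pi> j) (t * \<sigma> j)"
    if "i \<in> {1..r}" "j \<in> {1..r}" for i j t
    using assms that sref_ee2[of "r - 1" r] by (simp add: Cmap_ee2 \<pi>_def \<sigma>_def)
  obtain i j t where "1 \<le> i" "i < j" "j \<le> r" "t = 1 \<or> t = -1" "a = ee2 i 1 j t"
    "?D a = ee2 (\<pi> i) (\<sigma> i) (\<pi> j) (t * \<sigma> j)"
    "if \<pi> i < \<pi> j then \<sigma> i = 1 else t * \<sigma> j = 1"
    by (rule posroot_image_signed_perm[where \<pi> = \<pi> and \<sigma> = \<sigma> and u = ?D, OF _ _ _ image a])
      (use assms in \<open>auto simp: \<sigma>_def \<pi>_def transpose_def inj_on_def\<close>)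
  then show "?h a = 2 \<and> ?h (?D a) = 0 \<or> ?h a = 0 \<and> a 1 = 1 \<and> ?h (?D a) = 0 \<and> ?D a 1 = 0"
    using assms by (auto simp: \<sigma>_def \<pi>_def pairing_ee2 ee2_apply transpose_def ee_def split: if_splits)
qed (use assms in auto)

lemma not_rational_sref_Cmap:
  assumes r: "r \<ge> 3" and i: "i \<in> {1..r}" "i \<noteq> r - 1"
  shows "\<not> rational r (sref r i \<circ> Cmap r)"
proof -
  consider "i = 1" | "2 \<le> i \<and> i \<le> r - 2" | "i = r"
    using i by force
  then show ?thesis
  proof cases
    case 1
    have "(sref r i \<circ> Cmap r) (ee2 1 1 2 (-1)) = ee2 1 1 r (-1)"
      using r 1 by (simp add: Cmap_ee2 sref_ee2 ee2_commute[of r] transpose_def)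
    moreover have "root_le r (ee2 1 1 2 (-1)) (ee2 1 1 r (-1))"
      using r by (intro root_le_ee2_diff) auto
    moreover have "ee2 1 1 2 (-1) \<in> posroots r" "ee2 1 1 r (-1) \<in> posroots r"
      using r by (auto intro: ee2_in_posroots)
    ultimately show ?thesis
      by (metis not_rational_if_root_le_image)
  next
    case 2
    have "i \<in> {1..r}" "i + 1 \<in> {1..r}" "i < r" "i \<noteq> r" "i + 1 \<noteq> r" "i \<noteq> 1"
      using r 2 by auto
    then have "(sref r i \<circ> Cmap r) (ee2 i 1 (i + 1) (-1)) = ee2 i 1 (i + 1) (-1)"
      by (simp add: Cmap_ee2 sref_ee2 ee2_commute[of "Suc i"])
    moreover have "ee2 i 1 (i + 1) (-1) \<in> posroots r"
      using r 2 by (auto intro: ee2_in_posroots)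
    ultimately show ?thesis
      by (metis not_rational_if_root_le_image root_le_refl)
  next
    case 3
    have "(sref r i \<circ> Cmap r) (ee2 1 1 r 1) = ee2 1 1 (r - 1) 1"
      using r 3 by (simp add: fun_eq_iff Cmap_def sref_def ee2_def ee_def)
    moreover have "ee2 1 1 (r - 1) 1 = (\<lambda>m. ee2 1 1 r 1 m + alpha r (r - 1) m)"
      using r by (auto simp: fun_eq_iff ee2_def alpha_def ee_def)
    then have "root_le r (ee2 1 1 r 1) (ee2 1 1 (r - 1) 1)"
      using r by (simp add: root_le_add_alpha)
    moreover have "ee2 1 1 r 1 \<in> posroots r" "ee2 1 1 (r - 1) 1 \<in> posroots r"
      using r by (auto intro: ee2_in_posroots)
    ultimately show ?thesis
      by (metis not_rational_if_root_le_image)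
  qed
qed

theorem proposition4:
  fixes r :: nat
  assumes "r \<ge> 5" and "odd r"
  shows "gamma_vertex r (Cmap r) \<and> gamma_vertex r (inv (Cmap r))
       \<and> gamma_neighbors r (Cmap r) = {sref r (r - 1) \<circ> Cmap r}
       \<and> gamma_neighbors r (inv (Cmap r)) = {sref r r \<circ> inv (Cmap r)}"
proof -
  have C_in_weyl: "Cmap r \<in> weyl r"
    using assms by (intro Cmap_in_weyl) auto
  have inv_C: "inv (Cmap r) = flip_conj r (Cmap r)"
    using assms by (intro inv_Cmap) auto
  have vertex_C: "gamma_vertex r (Cmap r)"
    using assms C_in_weyl rational_Cmap by (simp add: gamma_vertex_def)
  have vertex_D: "gamma_vertex r (sref r (r - 1) \<circ> Cmap r)"
    using assms weyl.weyl_step[OF C_in_weyl, of "r - 1"] rational_sref_Cmap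
    by (simp add: gamma_vertex_def)
  have neighbors_C: "gamma_neighbors r (Cmap r) = {sref r (r - 1) \<circ> Cmap r}"
    by (rule gamma_neighbors_eq_singleton[OF _ _ vertex_C vertex_D])
      (use assms not_rational_sref_Cmap in auto)
  have "flip_conj r (sref r (r - 1) \<circ> Cmap r) = sref r r \<circ> inv (Cmap r)"
    using assms by (simp add: inv_C flip_conj_comp flip_conj_sref)
  then show ?thesis
    using assms vertex_C neighbors_C
    by (simp add: inv_C gamma_vertex_flip_conj gamma_neighbors_flip_conj)
qed

end
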